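(* Let $\alpha\ge1$ and $\beta\ge1$. If $N\subseteq C$, then every outcome satisfying $\alpha$-proportional fairness also satisfies $(1+\alpha)$-individual fairness, and every outcome satisfying $\beta$-individual fairness also satisfies $2\beta$-proportional fairness. If $N=C$, then every outcome satisfying $\beta$-individual fairness also satisfies $(1+\beta)$-proportional fairness.
   Context: Let $(\mathcal X,d)$ be a metric space, $N=[n]$ a set of agents and $C$ a set of candidates located in $\mathcal X$, $k\in\mathbb N^+$; an outcome is $W\subseteq C$ with $|W|\le k$; $B(i,r)=\{x\in\mathcal X:d(i,x)\le r\}$; $d(i,W)=\min_{c\in W}d(i,c)$. $\alpha$-proportional fairness: there is no group $N'\subseteq N$ with $|N'|\ge n/k$ and candidate $c\in C\setminus W$ such that $\alpha\, d(i,c)<d(i,W)$ for all $i\in N'$. $\beta$-individual fairness (defined for instances with $N\subseteq C$): $d(i,W)\le\beta\, r(i)$ for all $i\in N$, where $r(i)=\min\{r\in\mathbb R: |B(i,r)\cap N|\ge n/k\}$. *)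

theory Defs
  imports "HOL-Analysis.Analysis"
begin

text \<open>Agents and candidates are points of a metric space (type class metric_space,
  with metric dist). N is the finite set of agents, C the finite set of candidates.\<close>

definition dset :: "'a::metric_space \<Rightarrow> 'a set \<Rightarrow> real" where
  "dset i W = Min ((\<lambda>c. dist i c) ` W)"

definition outcome :: "'a set \<Rightarrow> nat \<Rightarrow> 'a set \<Rightarrow> bool" where
  "outcome C k W \<longleftrightarrow> W \<subseteq> C \<and> card W \<le> k \<and> W \<noteq> {}"

definition prop_fair :: "real \<Rightarrow> 'a::metric_space set \<Rightarrow> 'a set \<Rightarrow> nat \<Rightarrow> 'a set \<Rightarrow> bool" where
  "prop_fair \<alpha> N C k W \<longleftrightarrow>
     \<not> (\<exists>N'\<subseteq>N. \<exists>c\<in>C - W. real (card N') \<ge> real (card N) / real k \<and>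
                 (\<forall>i\<in>N'. \<alpha> * dist i c < dset i W))"

definition rad :: "'a::metric_space set \<Rightarrow> nat \<Rightarrow> 'a \<Rightarrow> real" where
  "rad N k i = (LEAST r::real. real (card (cball i r \<inter> N)) \<ge> real (card N) / real k)"

definition ind_fair :: "real \<Rightarrow> 'a::metric_space set \<Rightarrow> nat \<Rightarrow> 'a set \<Rightarrow> bool" where
  "ind_fair \<beta> N k W \<longleftrightarrow> (\<forall>i\<in>N. dset i W \<le> \<beta> * rad N k i)"

end

theory Submission
  imports Defs
begin

text \<open>
  Both directions compare a deviating group with the ball around an agent \<open>i\<close> that realises
  \<open>r(i)\<close>. If \<open>d(i,W) > (1 + \<alpha>) r(i)\<close>, then every \<open>j\<close> in that ball has
  \<open>d(j,W) \<ge> d(i,W) - r(i) > \<alpha> r(i) \<ge> \<alpha> d(j,i)\<close>, so the ball deviates towards the candidate \<open>i\<close>.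
  Conversely, a group \<open>N'\<close> deviating towards \<open>c\<close> lies in the ball of radius \<open>2R\<close> around its
  member \<open>i\<close> farthest from \<open>c\<close>, where \<open>R = d(i,c)\<close>; hence \<open>r(i) \<le> 2R\<close> and
  \<open>d(i,W) \<le> 2\<beta>R\<close>. If \<open>c\<close> is itself an agent, \<open>N'\<close> lies in the ball of radius \<open>R\<close> around \<open>c\<close>,
  so \<open>r(c) \<le> R\<close> and \<open>d(i,W) \<le> d(i,c) + d(c,W) \<le> (1 + \<beta>) R\<close>.
\<close>

lemma dset_le_dist:
  assumes "finite W" "w \<in> W"
  shows "dset i W \<le> dist i w"
  unfolding dset_def using assms by (intro Min_le) auto

lemma dset_attained:
  assumes "finite W" "W \<noteq> {}"
  obtains w where "w \<in> W" "dset i W = dist i w"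
proof -
  have "Min ((\<lambda>c. dist i c) ` W) \<in> (\<lambda>c. dist i c) ` W"
    using assms by (intro Min_in) auto
  with that show ?thesis unfolding dset_def by auto
qed

lemma dset_triangle:
  assumes "finite W" "W \<noteq> {}"
  shows "dset i W \<le> dist i j + dset j W"
proof -
  obtain w where "w \<in> W" "dset j W = dist j w"
    using dset_attained[OF assms] .
  moreover have "dset i W \<le> dist i w"
    using assms(1) \<open>w \<in> W\<close> by (rule dset_le_dist)
  ultimately show ?thesis
    using dist_triangle[of i w j] by simp
qed

lemma finite_farthest_point:
  fixes c :: "'a::metric_space"
  assumes "finite A" "A \<noteq> {}"
  obtains a where "a \<in> A" "\<And>x. x \<in> A \<Longrightarrow> dist x c \<le> dist a c"
proof -
  have "Max ((\<lambda>x. dist x c) ` A) \<in> (\<lambda>x. dist x c) ` A"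
    using assms by (intro Max_in) auto
  then obtain a where "a \<in> A" "dist a c = Max ((\<lambda>x. dist x c) ` A)"
    by auto
  with assms(1) show ?thesis
    by (intro that) auto
qed

text \<open>Hence the \<open>LEAST\<close> in the definition of \<open>rad\<close> is attained among the finitely many
  radii \<open>dist i ` N\<close>.\<close>

lemma cball_inter_eq_Max_dist:
  assumes "finite N" "cball i r \<inter> N \<noteq> {}"
  shows "cball i (Max (dist i ` (cball i r \<inter> N))) \<inter> N = cball i r \<inter> N"
proof -
  let ?s = "Max (dist i ` (cball i r \<inter> N))"
  have "?s \<le> r"
    using assms by (subst Max_le_iff) auto
  moreover have "dist i x \<le> ?s" if "x \<in> cball i r \<inter> N" for x
    using assms(1) that by (intro Max_ge) auto
  ultimately show ?thesis by auto
qed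

lemma least_quota_radius:
  fixes N :: "'a::metric_space set" and q :: real
  assumes "finite N" "0 < q" "q \<le> real (card N)"
  shows "\<exists>r\<in>dist i ` N. q \<le> real (card (cball i r \<inter> N)) \<and>
           (\<forall>y. q \<le> real (card (cball i y \<inter> N)) \<longrightarrow> r \<le> y)"
proof -
  define P where "P r \<longleftrightarrow> q \<le> real (card (cball i r \<inter> N))" for r
  define S where "S = {s \<in> dist i ` N. P s}"
  have attained_below: "\<exists>s\<in>S. s \<le> y" if "P y" for y
  proof -
    have "cball i y \<inter> N \<noteq> {}"
      using that \<open>0 < q\<close> unfolding P_def by (auto simp del: Int_iff)
    moreover define s where "s = Max (dist i ` (cball i y \<inter> N))"
    ultimately have "s \<in> dist i ` (cball i y \<inter> N)"
      and "cball i s \<inter> N = cball i y \<inter> N"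
      using assms(1) cball_inter_eq_Max_dist by (auto intro: Max_in)
    then have "s \<in> S" and "s \<le> y"
      using that unfolding S_def P_def by auto
    then show ?thesis by blast
  qed
  have "N \<subseteq> cball i (Max (dist i ` N))"
    using assms(1) by auto
  then have "P (Max (dist i ` N))"
    using assms(3) unfolding P_def by (simp add: Int_absorb1)
  then have "S \<noteq> {}"
    using attained_below by blast
  have "finite S"
    unfolding S_def using assms(1) by simp
  then have "Min S \<in> S"
    using \<open>S \<noteq> {}\<close> by (rule Min_in)
  moreover have "Min S \<le> y" if "P y" for y
    using attained_below[OF that] \<open>finite S\<close> by (auto intro: Min_le order_trans)
  ultimately show ?thesis
    unfolding S_def P_def by blast
qed

lemma rad_least_quota_radius:
  fixes N :: "'a::metric_space set"
  assumes "finite N" "N \<noteq> {}" "k > 0"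
  shows "rad N k i \<in> dist i ` N"
    and "real (card N) / real k \<le> real (card (cball i (rad N k i) \<inter> N))"
    and "real (card N) / real k \<le> real (card (cball i y \<inter> N)) \<Longrightarrow> rad N k i \<le> y"
proof -
  have "0 < real (card N) / real k"
    using assms by (simp add: card_gt_0_iff)
  moreover have "real (card N) / real k \<le> real (card N)"
    using assms(3) by (simp add: divide_le_eq mult_le_cancel_left1)
  ultimately obtain r where "r \<in> dist i ` N"
    and quota: "real (card N) / real k \<le> real (card (cball i r \<inter> N))"
    and least: "\<And>y. real (card N) / real k \<le> real (card (cball i y \<inter> N)) \<Longrightarrow> r \<le> y"
    using least_quota_radius[OF assms(1)] by blast
  have "rad N k i = r"
    unfolding rad_def using quota least by (rule Least_equality)
  with \<open>r \<in> dist i ` N\<close> quota least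
  show "rad N k i \<in> dist i ` N"
    and "real (card N) / real k \<le> real (card (cball i (rad N k i) \<inter> N))"
    and "real (card N) / real k \<le> real (card (cball i y \<inter> N)) \<Longrightarrow> rad N k i \<le> y"
    by simp_all
qed

lemma rad_quota:
  fixes N :: "'a::metric_space set"
  assumes "finite N" "N \<noteq> {}" "k > 0"
  shows "real (card N) / real k \<le> real (card (cball i (rad N k i) \<inter> N))"
  using assms by (rule rad_least_quota_radius(2))

lemma rad_nonneg:
  fixes N :: "'a::metric_space set"
  assumes "finite N" "N \<noteq> {}" "k > 0"
  shows "0 \<le> rad N k i"
  using rad_least_quota_radius(1)[OF assms, where i = i] by auto

lemma rad_le_if_group_in_cball:
  fixes N :: "'a::metric_space set"
  assumes "finite N" "N \<noteq> {}" "k > 0"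
    and "N' \<subseteq> cball x R \<inter> N" "real (card N) / real k \<le> real (card N')"
  shows "rad N k x \<le> R"
proof -
  have "card N' \<le> card (cball x R \<inter> N)"
    using assms(1,4) by (intro card_mono) auto
  with assms(5) have "real (card N) / real k \<le> real (card (cball x R \<inter> N))"
    by linarith
  then show ?thesis
    by (rule rad_least_quota_radius(3)[OF assms(1-3)])
qed

lemma deviating_group_farthest_member:
  fixes N :: "'a::metric_space set"
  assumes "finite N" "N \<noteq> {}" "k > 0"
    and "N' \<subseteq> N" "real (card N) / real k \<le> real (card N')"
  obtains i where "i \<in> N'" "\<And>j. j \<in> N' \<Longrightarrow> dist j c \<le> dist i c"
proof (rule finite_farthest_point)
  show "finite N'"
    using assms(4,1) by (rule finite_subset)
  have "0 < real (card N) / real k"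
    using assms(1-3) by (simp add: card_gt_0_iff)
  with assms(5) show "N' \<noteq> {}" by auto
qed (rule that)

lemma prop_fair_imp_ind_fair:
  fixes N C :: "'a::metric_space set"
  assumes "finite N" "N \<noteq> {}" "k > 0" "finite C" "N \<subseteq> C" "0 \<le> \<alpha>"
    and "outcome C k W" "prop_fair \<alpha> N C k W"
  shows "ind_fair (1 + \<alpha>) N k W"
  unfolding ind_fair_def
proof (rule ballI, rule ccontr)
  fix i assume "i \<in> N" and far: "\<not> dset i W \<le> (1 + \<alpha>) * rad N k i"
  have W: "finite W" "W \<noteq> {}"
    using assms(4,7) unfolding outcome_def by (auto intro: finite_subset)
  let ?r = "rad N k i"
  have "0 \<le> ?r"
    using assms(1-3) by (rule rad_nonneg)
  have "i \<notin> W"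
  proof
    assume "i \<in> W"
    then have "dset i W \<le> 0"
      using dset_le_dist[OF W(1), of i i] by simp
    moreover have "0 \<le> (1 + \<alpha>) * ?r"
      using \<open>0 \<le> ?r\<close> \<open>0 \<le> \<alpha>\<close> by simp
    ultimately show False
      using far by simp
  qed
  define N' where "N' = cball i ?r \<inter> N"
  have "\<alpha> * dist j i < dset j W" if "j \<in> N'" for j
  proof -
    have "dist i j \<le> ?r"
      using that unfolding N'_def by simp
    moreover have "dset i W \<le> dist i j + dset j W"
      using W by (rule dset_triangle)
    moreover have "\<alpha> * dist j i \<le> \<alpha> * ?r"
      using \<open>dist i j \<le> ?r\<close> \<open>0 \<le> \<alpha>\<close> by (simp add: dist_commute mult_left_mono)
    ultimately show ?thesis
      using far by (simp add: algebra_simps)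
  qed
  moreover have "real (card N) / real k \<le> real (card N')"
    unfolding N'_def using assms(1-3) by (rule rad_quota)
  moreover have "N' \<subseteq> N" "i \<in> C - W"
    unfolding N'_def using \<open>i \<in> N\<close> \<open>i \<notin> W\<close> assms(5) by auto
  ultimately show False
    using assms(8) unfolding prop_fair_def by blast
qed

lemma ind_fair_imp_prop_fair_double:
  fixes N C :: "'a::metric_space set"
  assumes "finite N" "N \<noteq> {}" "k > 0" "0 \<le> \<beta>" "ind_fair \<beta> N k W"
  shows "prop_fair (2 * \<beta>) N C k W"
  unfolding prop_fair_def
proof (intro notI, elim exE bexE conjE)
  fix N' c
  assume "N' \<subseteq> N" and quota: "real (card N) / real k \<le> real (card N')"
    and closer: "\<forall>j\<in>N'. 2 * \<beta> * dist j c < dset j W"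
  obtain i where "i \<in> N'" and farthest: "\<And>j. j \<in> N' \<Longrightarrow> dist j c \<le> dist i c"
    using deviating_group_farthest_member[OF assms(1-3) \<open>N' \<subseteq> N\<close> quota] by blast
  have "N' \<subseteq> cball i (2 * dist i c) \<inter> N"
  proof
    fix j assume "j \<in> N'"
    then have "dist i j \<le> 2 * dist i c"
      using dist_triangle[of i j c] farthest[of j] by (simp add: dist_commute)
    with \<open>j \<in> N'\<close> \<open>N' \<subseteq> N\<close> show "j \<in> cball i (2 * dist i c) \<inter> N" by auto
  qed
  then have "rad N k i \<le> 2 * dist i c"
    using rad_le_if_group_in_cball[OF assms(1-3) _ quota] by blast
  moreover have "dset i W \<le> \<beta> * rad N k i"
    using assms(5) \<open>i \<in> N'\<close> \<open>N' \<subseteq> N\<close> unfolding ind_fair_def by blast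
  ultimately have "dset i W \<le> \<beta> * (2 * dist i c)"
    using \<open>0 \<le> \<beta>\<close> by (meson mult_left_mono order_trans)
  with closer \<open>i \<in> N'\<close> show False by (fastforce simp: mult.assoc)
qed

lemma ind_fair_imp_prop_fair_if_candidates_agents:
  fixes N C :: "'a::metric_space set"
  assumes "finite N" "N \<noteq> {}" "k > 0" "C \<subseteq> N" "0 \<le> \<beta>"
    and "outcome C k W" "ind_fair \<beta> N k W"
  shows "prop_fair (1 + \<beta>) N C k W"
  unfolding prop_fair_def
proof (intro notI, elim exE bexE conjE)
  fix N' c
  assume "N' \<subseteq> N" "c \<in> C - W" and quota: "real (card N) / real k \<le> real (card N')"
    and closer: "\<forall>j\<in>N'. (1 + \<beta>) * dist j c < dset j W"
  have W: "finite W" "W \<noteq> {}"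
    using assms(6) finite_subset[OF assms(4,1)] unfolding outcome_def by (auto intro: finite_subset)
  obtain i where "i \<in> N'" and farthest: "\<And>j. j \<in> N' \<Longrightarrow> dist j c \<le> dist i c"
    using deviating_group_farthest_member[OF assms(1-3) \<open>N' \<subseteq> N\<close> quota] by blast
  have "N' \<subseteq> cball c (dist i c) \<inter> N"
    using farthest \<open>N' \<subseteq> N\<close> by (auto simp: dist_commute)
  then have "rad N k c \<le> dist i c"
    using rad_le_if_group_in_cball[OF assms(1-3) _ quota] by blast
  moreover have "dset c W \<le> \<beta> * rad N k c"
    using assms(4,7) \<open>c \<in> C - W\<close> unfolding ind_fair_def by blast
  moreover have "dset i W \<le> dist i c + dset c W"
    using W by (rule dset_triangle)
  ultimately have "dset i W \<le> dist i c + \<beta> * dist i c"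
    using \<open>0 \<le> \<beta>\<close> mult_left_mono[of "rad N k c" "dist i c" \<beta>] by linarith
  with closer \<open>i \<in> N'\<close> show False by (fastforce simp: algebra_simps)
qed

theorem theorem1:
  fixes N C :: "'a::metric_space set" and k :: nat and \<alpha> \<beta> :: real
  assumes "finite N" and "N \<noteq> {}" and "finite C" and "k > 0"
    and "\<alpha> \<ge> 1" and "\<beta> \<ge> 1"
  shows "(N \<subseteq> C \<longrightarrow>
            (\<forall>W. outcome C k W \<and> prop_fair \<alpha> N C k W \<longrightarrow> ind_fair (1 + \<alpha>) N k W) \<and>
            (\<forall>W. outcome C k W \<and> ind_fair \<beta> N k W \<longrightarrow> prop_fair (2 * \<beta>) N C k W))
       \<and> (N = C \<longrightarrow>
            (\<forall>W. outcome C k W \<and> ind_fair \<beta> N k W \<longrightarrow> prop_fair (1 + \<beta>) N C k W))"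
  using prop_fair_imp_ind_fair[OF assms(1,2,4,3) _ _]
    ind_fair_imp_prop_fair_double[OF assms(1,2,4)]
    ind_fair_imp_prop_fair_if_candidates_agents[OF assms(1,2,4)]
    assms(5,6)
  by auto

end
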